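(* Let $\mathcal L$ be a linearly ordered MV-algebra that has a discrete point. If $\mathcal F$ is a prime lattice filter of $\mathcal L$ with $\mathcal K(\mathcal F)=\{1\}$, then $\mathcal F$ is principal, i.e. $\mathcal F=\{x : x\ge p\}$ for some $p\in L$.
   Context: $\mathcal L=(L,\oplus,\lnot,0)$ is an MV-algebra, with $1=\lnot0$ and $x\to y=\lnot x\oplus y$. A discrete point is an element having an immediate successor or an immediate predecessor in the order. A lattice filter is a nonempty upward-closed subset closed under $\wedge$. It is prime if it is proper and $a\vee b\in\mathcal F$ implies $a\in\mathcal F$ or $b\in\mathcal F$. The kernel of $\mathcal F$ is $\mathcal K(\mathcal F)=\{z:\forall a\notin\mathcal F,\ z\to a\notin\mathcal F\}$. *)

theory Defs
  imports Main
begin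

definition mv_algebra :: "'a set \<Rightarrow> ('a \<Rightarrow> 'a \<Rightarrow> 'a) \<Rightarrow> ('a \<Rightarrow> 'a) \<Rightarrow> 'a \<Rightarrow> bool" where
  "mv_algebra L pl ng z \<longleftrightarrow>
     z \<in> L \<and>
     (\<forall>x\<in>L. \<forall>y\<in>L. pl x y \<in> L) \<and>
     (\<forall>x\<in>L. ng x \<in> L) \<and>
     (\<forall>x\<in>L. \<forall>y\<in>L. \<forall>w\<in>L. pl (pl x y) w = pl x (pl y w)) \<and>
     (\<forall>x\<in>L. \<forall>y\<in>L. pl x y = pl y x) \<and>
     (\<forall>x\<in>L. pl x z = x) \<and>
     (\<forall>x\<in>L. ng (ng x) = x) \<and>
     (\<forall>x\<in>L. pl x (ng z) = ng z) \<and>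
     (\<forall>x\<in>L. \<forall>y\<in>L. pl (ng (pl (ng x) y)) y = pl (ng (pl (ng y) x)) x)"

definition mv_one :: "('a \<Rightarrow> 'a) \<Rightarrow> 'a \<Rightarrow> 'a" where
  "mv_one ng z = ng z"

definition mv_imp :: "('a \<Rightarrow> 'a \<Rightarrow> 'a) \<Rightarrow> ('a \<Rightarrow> 'a) \<Rightarrow> 'a \<Rightarrow> 'a \<Rightarrow> 'a" where
  "mv_imp pl ng x y = pl (ng x) y"

definition mv_le :: "('a \<Rightarrow> 'a \<Rightarrow> 'a) \<Rightarrow> ('a \<Rightarrow> 'a) \<Rightarrow> 'a \<Rightarrow> 'a \<Rightarrow> 'a \<Rightarrow> bool" where
  "mv_le pl ng z x y \<longleftrightarrow> mv_imp pl ng x y = mv_one ng z"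

definition mv_less :: "('a \<Rightarrow> 'a \<Rightarrow> 'a) \<Rightarrow> ('a \<Rightarrow> 'a) \<Rightarrow> 'a \<Rightarrow> 'a \<Rightarrow> 'a \<Rightarrow> bool" where
  "mv_less pl ng z x y \<longleftrightarrow> mv_le pl ng z x y \<and> x \<noteq> y"

definition mv_join :: "('a \<Rightarrow> 'a \<Rightarrow> 'a) \<Rightarrow> ('a \<Rightarrow> 'a) \<Rightarrow> 'a \<Rightarrow> 'a \<Rightarrow> 'a" where
  "mv_join pl ng x y = pl (ng (pl (ng x) y)) y"

definition mv_meet :: "('a \<Rightarrow> 'a \<Rightarrow> 'a) \<Rightarrow> ('a \<Rightarrow> 'a) \<Rightarrow> 'a \<Rightarrow> 'a \<Rightarrow> 'a" where
  "mv_meet pl ng x y = ng (mv_join pl ng (ng x) (ng y))"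

definition mv_linear :: "'a set \<Rightarrow> ('a \<Rightarrow> 'a \<Rightarrow> 'a) \<Rightarrow> ('a \<Rightarrow> 'a) \<Rightarrow> 'a \<Rightarrow> bool" where
  "mv_linear L pl ng z \<longleftrightarrow> (\<forall>x\<in>L. \<forall>y\<in>L. mv_le pl ng z x y \<or> mv_le pl ng z y x)"

definition mv_covers :: "'a set \<Rightarrow> ('a \<Rightarrow> 'a \<Rightarrow> 'a) \<Rightarrow> ('a \<Rightarrow> 'a) \<Rightarrow> 'a \<Rightarrow> 'a \<Rightarrow> 'a \<Rightarrow> bool" where
  "mv_covers L pl ng z x y \<longleftrightarrow> mv_less pl ng z x y \<and>
     \<not> (\<exists>w\<in>L. mv_less pl ng z x w \<and> mv_less pl ng z w y)"

definition mv_discrete_point :: "'a set \<Rightarrow> ('a \<Rightarrow> 'a \<Rightarrow> 'a) \<Rightarrow> ('a \<Rightarrow> 'a) \<Rightarrow> 'a \<Rightarrow> 'a \<Rightarrow> bool" where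
  "mv_discrete_point L pl ng z x \<longleftrightarrow> x \<in> L \<and>
     ((\<exists>y\<in>L. mv_covers L pl ng z x y) \<or> (\<exists>y\<in>L. mv_covers L pl ng z y x))"

definition lattice_filter :: "'a set \<Rightarrow> ('a \<Rightarrow> 'a \<Rightarrow> 'a) \<Rightarrow> ('a \<Rightarrow> 'a) \<Rightarrow> 'a \<Rightarrow> 'a set \<Rightarrow> bool" where
  "lattice_filter L pl ng z F \<longleftrightarrow> F \<subseteq> L \<and> F \<noteq> {} \<and>
     (\<forall>x\<in>F. \<forall>y\<in>L. mv_le pl ng z x y \<longrightarrow> y \<in> F) \<and>
     (\<forall>x\<in>F. \<forall>y\<in>F. mv_meet pl ng x y \<in> F)"

definition prime_lattice_filter :: "'a set \<Rightarrow> ('a \<Rightarrow> 'a \<Rightarrow> 'a) \<Rightarrow> ('a \<Rightarrow> 'a) \<Rightarrow> 'a \<Rightarrow> 'a set \<Rightarrow> bool" where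
  "prime_lattice_filter L pl ng z F \<longleftrightarrow> lattice_filter L pl ng z F \<and> F \<noteq> L \<and>
     (\<forall>a\<in>L. \<forall>b\<in>L. mv_join pl ng a b \<in> F \<longrightarrow> a \<in> F \<or> b \<in> F)"

definition filter_kernel :: "'a set \<Rightarrow> ('a \<Rightarrow> 'a \<Rightarrow> 'a) \<Rightarrow> ('a \<Rightarrow> 'a) \<Rightarrow> 'a set \<Rightarrow> 'a set" where
  "filter_kernel L pl ng F = {w \<in> L. \<forall>a \<in> L - F. mv_imp pl ng w a \<notin> F}"

end

theory Submission
  imports Defs
begin

(*
  Write x \<ominus> a for the Lukasiewicz difference not(not x \<oplus> a).
  (1) In a linear MV-algebra a covering pair x < y (which any discrete point
      provides) yields an atom: d = y \<ominus> x is nonzero and below every nonzero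
      element.  Indeed for 0 < e < d the element x \<oplus> e lies between x and
      x \<oplus> d = y, while (x \<oplus> e) \<ominus> x = min(e, not x), which excludes both
      x \<oplus> e = x and x \<oplus> e = y.
  (2) If d is an atom and F an up-set of a chain, then any a \<notin> F with
      a \<oplus> d \<in> F makes F principal, generated by a \<oplus> d: every u \<in> F lies
      strictly above a, so u = a \<oplus> (u \<ominus> a) with u \<ominus> a \<noteq> 0, hence \<ge> d.
  (3) Hence, for a non-principal filter F, not d \<rightarrow> a = a \<oplus> d \<notin> F for all
      a \<notin> F, i.e. not d belongs to the kernel of F.
*)

locale mv_alg =
  fixes L :: "'a set" and pl :: "'a \<Rightarrow> 'a \<Rightarrow> 'a" and ng :: "'a \<Rightarrow> 'a" and z :: 'a
  assumes mv: "mv_algebra L pl ng z"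
begin

abbreviation leq :: "'a \<Rightarrow> 'a \<Rightarrow> bool" where
  "leq x y \<equiv> mv_le pl ng z x y"

abbreviation ldiff :: "'a \<Rightarrow> 'a \<Rightarrow> 'a" where
  "ldiff x y \<equiv> ng (pl (ng x) y)"

lemma zero_closed: "z \<in> L"
  using mv unfolding mv_algebra_def by blast

lemma plus_closed: "x \<in> L \<Longrightarrow> y \<in> L \<Longrightarrow> pl x y \<in> L"
  using mv unfolding mv_algebra_def by blast

lemma neg_closed: "x \<in> L \<Longrightarrow> ng x \<in> L"
  using mv unfolding mv_algebra_def by blast

lemma plus_assoc: "x \<in> L \<Longrightarrow> y \<in> L \<Longrightarrow> w \<in> L \<Longrightarrow> pl (pl x y) w = pl x (pl y w)"
  using mv unfolding mv_algebra_def by blast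

lemma plus_comm: "x \<in> L \<Longrightarrow> y \<in> L \<Longrightarrow> pl x y = pl y x"
  using mv unfolding mv_algebra_def by blast

lemma plus_zero: "x \<in> L \<Longrightarrow> pl x z = x"
  using mv unfolding mv_algebra_def by blast

lemma neg_neg: "x \<in> L \<Longrightarrow> ng (ng x) = x"
  using mv unfolding mv_algebra_def by blast

lemma plus_one: "x \<in> L \<Longrightarrow> pl x (ng z) = ng z"
  using mv unfolding mv_algebra_def by blast

lemma lukasiewicz: "x \<in> L \<Longrightarrow> y \<in> L \<Longrightarrow> pl (ldiff x y) y = pl (ldiff y x) x"
  using mv unfolding mv_algebra_def by blast

lemmas closed = zero_closed plus_closed neg_closed

lemma zero_plus: "x \<in> L \<Longrightarrow> pl z x = x"
  using plus_comm plus_zero zero_closed by metis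

lemma neg_plus_self: "x \<in> L \<Longrightarrow> pl (ng x) x = ng z"
proof -
  assume x: "x \<in> L"
  have "pl (ng x) x = pl (ldiff (ng z) x) x"
    using neg_neg zero_closed zero_plus x by simp
  also have "\<dots> = pl (ldiff x (ng z)) (ng z)"
    using lukasiewicz[of x "ng z"] closed x by simp
  also have "\<dots> = ng z"
    using plus_one closed x by simp
  finally show ?thesis .
qed

lemma le_refl: "x \<in> L \<Longrightarrow> leq x x"
  unfolding mv_le_def mv_imp_def mv_one_def using neg_plus_self by simp

lemma diff_zero_imp_le: "x \<in> L \<Longrightarrow> y \<in> L \<Longrightarrow> ldiff y x = z \<Longrightarrow> leq y x"
  unfolding mv_le_def mv_imp_def mv_one_def using neg_neg neg_closed plus_closed by metis

lemma join_of_le: "y \<in> L \<Longrightarrow> leq x y \<Longrightarrow> mv_join pl ng x y = y"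
  unfolding mv_le_def mv_imp_def mv_one_def mv_join_def
  using neg_neg zero_closed zero_plus by simp

lemma join_comm: "x \<in> L \<Longrightarrow> y \<in> L \<Longrightarrow> mv_join pl ng x y = mv_join pl ng y x"
  unfolding mv_join_def using lukasiewicz by blast

lemma le_antisym: "x \<in> L \<Longrightarrow> y \<in> L \<Longrightarrow> leq x y \<Longrightarrow> leq y x \<Longrightarrow> x = y"
  using join_of_le join_comm by metis

lemma one_le: "y \<in> L \<Longrightarrow> leq (ng z) y \<Longrightarrow> y = ng z"
  unfolding mv_le_def mv_imp_def mv_one_def using neg_neg zero_closed zero_plus by simp

lemma plus_diff: "a \<in> L \<Longrightarrow> x \<in> L \<Longrightarrow> leq a x \<Longrightarrow> pl a (ldiff x a) = x"
  using join_of_le join_comm plus_comm closed unfolding mv_join_def by metis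

lemma le_plus: "x \<in> L \<Longrightarrow> c \<in> L \<Longrightarrow> leq x (pl x c)"
proof -
  assume x: "x \<in> L" and c: "c \<in> L"
  have "pl (ng x) (pl x c) = pl (pl (ng x) x) c"
    using plus_assoc closed x c by simp
  also have "\<dots> = ng z"
    using neg_plus_self plus_one plus_comm closed x c by metis
  finally show ?thesis unfolding mv_le_def mv_imp_def mv_one_def .
qed

lemma plus_mono: "a \<in> L \<Longrightarrow> d \<in> L \<Longrightarrow> e \<in> L \<Longrightarrow> leq d e \<Longrightarrow> leq (pl a d) (pl a e)"
proof -
  assume a: "a \<in> L" and d: "d \<in> L" and e: "e \<in> L" and de: "leq d e"
  have "pl a e = pl (pl a d) (ldiff e d)"
    using plus_diff[OF d e de] plus_assoc closed a d e by metis
  thus ?thesis using le_plus closed a d e by metis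
qed

lemma meet_cases:
  assumes lin: "mv_linear L pl ng z" and x: "x \<in> L" and y: "y \<in> L"
  shows "(leq x y \<and> mv_meet pl ng x y = x) \<or> (leq y x \<and> mv_meet pl ng x y = y)"
proof -
  have neg_anti: "leq (ng v) (ng u)" if "u \<in> L" "v \<in> L" "leq u v" for u v
    using that unfolding mv_le_def mv_imp_def using neg_neg plus_comm closed by metis
  from lin x y consider "leq x y" | "leq y x" unfolding mv_linear_def by blast
  thus ?thesis
  proof cases
    case 1
    hence "mv_join pl ng (ng x) (ng y) = ng x"
      using join_of_le join_comm neg_anti closed x y by metis
    thus ?thesis using 1 neg_neg x unfolding mv_meet_def by simp
  next
    case 2
    hence "mv_join pl ng (ng x) (ng y) = ng y"
      using join_of_le neg_anti closed x y by metis
    thus ?thesis using 2 neg_neg y unfolding mv_meet_def by simp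
  qed
qed

lemma plus_diff_self: "e \<in> L \<Longrightarrow> x \<in> L \<Longrightarrow> ldiff (pl x e) x = mv_meet pl ng e (ng x)"
  unfolding mv_meet_def mv_join_def using neg_neg plus_comm by simp

definition atom :: "'a \<Rightarrow> bool" where
  "atom d \<longleftrightarrow> d \<in> L \<and> d \<noteq> z \<and> (\<forall>e\<in>L. e \<noteq> z \<longrightarrow> leq d e)"

lemma covering_pair_atom:
  assumes lin: "mv_linear L pl ng z" and x: "x \<in> L" and y: "y \<in> L"
    and cov: "mv_covers L pl ng z x y"
  shows "atom (ldiff y x)"
proof -
  define d where "d = ldiff y x"
  have xy: "leq x y" "x \<noteq> y"
    using cov unfolding mv_covers_def mv_less_def by auto
  have dL: "d \<in> L" unfolding d_def using closed x y by blast
  have "d \<noteq> z"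
    using diff_zero_imp_le le_antisym x y xy unfolding d_def by blast
  moreover have "leq d e" if e: "e \<in> L" and "e \<noteq> z" for e
  proof (rule ccontr)
    assume not_de: "\<not> leq d e"
    hence ed: "leq e d" using lin dL e unfolding mv_linear_def by blast
    define w where "w = pl x e"
    have wL: "w \<in> L" unfolding w_def using closed x e by blast
    have "leq x w" unfolding w_def using le_plus x e by blast
    moreover have "leq w y"
      using plus_mono[OF x e dL ed] plus_diff[OF x y xy(1)] unfolding w_def d_def by simp
    ultimately have "w = x \<or> w = y"
      using cov wL unfolding mv_covers_def mv_less_def by blast
    moreover have w_diff: "ldiff w x = mv_meet pl ng e (ng x)"
      unfolding w_def using plus_diff_self e x by blast
    moreover have meet: "(leq e (ng x) \<and> mv_meet pl ng e (ng x) = e) \<or>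
                         (leq (ng x) e \<and> mv_meet pl ng e (ng x) = ng x)"
      using meet_cases lin e closed x by blast
    moreover have "w \<noteq> y"
      using w_diff meet not_de le_refl dL unfolding d_def by metis
    moreover have "w \<noteq> x"
    proof
      assume "w = x"
      hence "mv_meet pl ng e (ng x) = z"
        using w_diff neg_plus_self neg_neg zero_closed x by simp
      hence "ng x = z" using meet \<open>e \<noteq> z\<close> by metis
      hence "x = ng z" using neg_neg x by metis
      thus False using one_le y xy by metis
    qed
    ultimately show False by blast
  qed
  ultimately show ?thesis using dL unfolding atom_def d_def by blast
qed

lemma upset_principal_from_atom:
  assumes lin: "mv_linear L pl ng z" and d: "atom d"
    and FL: "F \<subseteq> L" and up: "\<forall>u\<in>F. \<forall>v\<in>L. leq u v \<longrightarrow> v \<in> F"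
    and a: "a \<in> L" "a \<notin> F" and ad: "pl a d \<in> F"
  shows "F = {x \<in> L. leq (pl a d) x}"
proof
  show "{x \<in> L. leq (pl a d) x} \<subseteq> F" using up ad by blast
next
  show "F \<subseteq> {x \<in> L. leq (pl a d) x}"
  proof
    fix u assume uF: "u \<in> F"
    have u: "u \<in> L" using uF FL by blast
    have dL: "d \<in> L" using d unfolding atom_def by blast
    have au: "leq a u"
    proof (rule ccontr)
      assume "\<not> leq a u"
      hence "leq u a" using lin a(1) u unfolding mv_linear_def by blast
      thus False using up uF a by blast
    qed
    have diffL: "ldiff u a \<in> L" using closed a(1) u by blast
    have "ldiff u a \<noteq> z"
      using diff_zero_imp_le[OF a(1) u] le_antisym[OF a(1) u au] uF a(2) by blast
    hence "leq d (ldiff u a)" using d diffL unfolding atom_def by blast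
    hence "leq (pl a d) (pl a (ldiff u a))" by (rule plus_mono[OF a(1) dL diffL])
    thus "u \<in> {x \<in> L. leq (pl a d) x}" using plus_diff[OF a(1) u au] u by simp
  qed
qed

lemma neg_atom_in_kernel:
  assumes lin: "mv_linear L pl ng z" and d: "atom d"
    and F: "lattice_filter L pl ng z F"
    and nonprincipal: "\<not> (\<exists>p\<in>L. F = {x \<in> L. leq p x})"
  shows "ng d \<in> filter_kernel L pl ng F"
proof -
  have dL: "d \<in> L" using d unfolding atom_def by blast
  have FL: "F \<subseteq> L" and up: "\<forall>u\<in>F. \<forall>v\<in>L. leq u v \<longrightarrow> v \<in> F"
    using F unfolding lattice_filter_def by blast+
  have "mv_imp pl ng (ng d) a \<notin> F" if a: "a \<in> L" "a \<notin> F" for a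
  proof
    assume "mv_imp pl ng (ng d) a \<in> F"
    moreover have "mv_imp pl ng (ng d) a = pl a d"
      unfolding mv_imp_def using neg_neg[OF dL] plus_comm[OF dL a(1)] by simp
    ultimately have "pl a d \<in> F" by simp
    hence "F = {x \<in> L. leq (pl a d) x}"
      by (rule upset_principal_from_atom[OF lin d FL up a])
    thus False using nonprincipal plus_closed[OF a(1) dL] by blast
  qed
  thus ?thesis unfolding filter_kernel_def using neg_closed[OF dL] by blast
qed

end

theorem mainTheorem12:
  fixes L :: "'a set" and pl :: "'a \<Rightarrow> 'a \<Rightarrow> 'a" and ng :: "'a \<Rightarrow> 'a" and z :: 'a
    and F :: "'a set"
  assumes "mv_algebra L pl ng z"
    and "mv_linear L pl ng z"
    and "\<exists>d\<in>L. mv_discrete_point L pl ng z d"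
    and "prime_lattice_filter L pl ng z F"
    and "filter_kernel L pl ng F = {mv_one ng z}"
  shows "\<exists>p\<in>L. F = {x \<in> L. mv_le pl ng z p x}"
proof (rule ccontr)
  interpret mv_alg L pl ng z by (rule mv_alg.intro) (fact assms(1))
  assume nonprincipal: "\<not> (\<exists>p\<in>L. F = {x \<in> L. mv_le pl ng z p x})"
  obtain x y where "x \<in> L" "y \<in> L" "mv_covers L pl ng z x y"
    using assms(3) unfolding mv_discrete_point_def by blast
  then have "atom (ldiff y x)"
    by (rule covering_pair_atom[OF assms(2)])
  then obtain d where d: "atom d" by blast
  have "lattice_filter L pl ng z F"
    using assms(4) unfolding prime_lattice_filter_def by blast
  hence "ng d \<in> filter_kernel L pl ng F"
    by (rule neg_atom_in_kernel[OF assms(2) d _ nonprincipal])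
  hence "ng d = ng z" using assms(5) unfolding mv_one_def by blast
  hence "d = z" using d neg_neg[of d] neg_neg[OF zero_closed] unfolding atom_def by metis
  thus False using d unfolding atom_def by blast
qed

end
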